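(* Let $\mathcal{X}$ and $\mathcal{A}=\mathcal{B}$ be finite sets and let $P_{XAB}$ be a probability distribution on $\mathcal{X}\times\mathcal{A}\times\mathcal{B}$ such that (i) the marginal $P_X$ is uniform on $\mathcal{X}$; (ii) $P_{AB|X}=P_{A|X}P_{B|X}$, i.e. $P_{XAB}(x,a,b)=P_X(x)P_{A|X}(a|x)P_{B|X}(b|x)$; (iii) $P_{A|X}=P_{B|X}$. For functions $f\colon\mathcal{A}\to\mathcal{X}$, $g\colon\mathcal{B}\to\mathcal{X}$ let $$W(f,g)=\sum_{x\in\mathcal{X},a\in\mathcal{A},b\in\mathcal{B}}P_{XAB}(x,a,b)\,\delta[f(a)=g(b)=x].$$ Then there exists a function $f\colon\mathcal{A}\to\mathcal{X}$ such that $W(f,f)=\max_{f',g'}W(f',g')$, where the maximum ranges over all pairs of functions $f'\colon\mathcal{A}\to\mathcal{X}$, $g'\colon\mathcal{B}\to\mathcal{X}$. In other words, the classical LSSD game defined by $P_{XAB}$ has an optimal deterministic strategy that is symmetric.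
   Context: $\delta[\cdot]$ denotes the indicator function, equal to $1$ if its argument is true and $0$ otherwise. In the (two-player, classical) local simultaneous state discrimination (LSSD) game defined by $P_{XAB}$, a referee samples $(x,a,b)\sim P_{XAB}$ and gives $a$ to Alice and $b$ to Bob; without communicating, they output guesses of $x$ and win iff both guesses equal $x$. A deterministic strategy is a pair of functions $(f,g)$ with winning probability $W(f,g)$; it is symmetric if $f=g$. *)

theory Defs
  imports Complex_Main
begin

definition delta :: "bool \<Rightarrow> real" where
  "delta b = (if b then 1 else 0)"

definition W :: "('x::finite \<Rightarrow> 'a::finite \<Rightarrow> 'b::finite \<Rightarrow> real) \<Rightarrow> ('a \<Rightarrow> 'x) \<Rightarrow> ('b \<Rightarrow> 'x) \<Rightarrow> real" where
  "W P f g = (\<Sum>x\<in>UNIV. \<Sum>a\<in>UNIV. \<Sum>b\<in>UNIV. P x a b * delta (f a = x \<and> g b = x))"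

end

theory Submission
  imports Defs
begin

text \<open>If the question is encoded independently and identically for both players, the winning
  probability is \<open>W(f,g) = \<Sum>\<^sub>x P\<^sub>X(x) s\<^sub>f(x) s\<^sub>g(x)\<close>, where \<open>s\<^sub>f(x)\<close> is the probability that \<open>f\<close>
  guesses \<open>x\<close> correctly. By AM-GM, \<open>W(f,g) \<le> (W(f,f) + W(g,g))/2\<close>, so the better of the two
  symmetric strategies \<open>(f,f)\<close>, \<open>(g,g)\<close> is at least as good as any optimal pair \<open>(f,g)\<close>.\<close>

definition success_prob :: "('x \<Rightarrow> 'a::finite \<Rightarrow> real) \<Rightarrow> ('a \<Rightarrow> 'x) \<Rightarrow> 'x \<Rightarrow> real" where
  "success_prob Q f x = (\<Sum>a\<in>UNIV. Q x a * delta (f a = x))"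

lemma W_product_eq:
  fixes P :: "'x::finite \<Rightarrow> 'a::finite \<Rightarrow> 'a \<Rightarrow> real"
  assumes "\<And>x a b. P x a b = PX x * Q x a * Q x b"
  shows "W P f g = (\<Sum>x\<in>UNIV. PX x * (success_prob Q f x * success_prob Q g x))"
proof -
  have "W P f g = (\<Sum>x\<in>UNIV. \<Sum>a\<in>UNIV. \<Sum>b\<in>UNIV.
      PX x * ((Q x a * delta (f a = x)) * (Q x b * delta (g b = x))))"
    unfolding W_def assms by (intro sum.cong refl) (simp add: delta_def)
  also have "\<dots> = (\<Sum>x\<in>UNIV. PX x * (success_prob Q f x * success_prob Q g x))"
    unfolding success_prob_def
    by (intro sum.cong refl) (subst sum_product, simp add: sum_distrib_left)
  finally show ?thesis .
qed

lemma W_product_le_symmetric_mean: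
  fixes P :: "'x::finite \<Rightarrow> 'a::finite \<Rightarrow> 'a \<Rightarrow> real"
  assumes P_prod: "\<And>x a b. P x a b = PX x * Q x a * Q x b"
    and PX_nonneg: "\<And>x. PX x \<ge> 0"
  shows "W P f g \<le> (W P f f + W P g g) / 2"
proof -
  let ?s = "success_prob Q"
  have "PX x * (?s f x * ?s g x) \<le> (PX x * (?s f x * ?s f x) + PX x * (?s g x * ?s g x)) / 2"
    for x
  proof -
    have "2 * (?s f x * ?s g x) \<le> ?s f x * ?s f x + ?s g x * ?s g x"
      using sum_squares_ge_zero[of "?s f x - ?s g x" 0] by (simp add: algebra_simps)
    then have "PX x * (2 * (?s f x * ?s g x)) \<le> PX x * (?s f x * ?s f x + ?s g x * ?s g x)"
      using PX_nonneg by (rule mult_left_mono)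
    then show ?thesis by (simp add: algebra_simps)
  qed
  then have "(\<Sum>x\<in>UNIV. PX x * (?s f x * ?s g x))
      \<le> (\<Sum>x\<in>UNIV. (PX x * (?s f x * ?s f x) + PX x * (?s g x * ?s g x)) / 2)"
    by (rule sum_mono)
  then show ?thesis
    unfolding W_product_eq[OF P_prod] by (simp add: sum.distrib sum_divide_distrib[symmetric])
qed

lemma Max_attained_on_diagonal:
  fixes F :: "'s::finite \<Rightarrow> 's \<Rightarrow> real"
  assumes mean: "\<And>f g. F f g \<le> (F f f + F g g) / 2"
  shows "\<exists>f. F f f = Max {F f' g' | f' g'. True}"
proof -
  let ?M = "{F f' g' | f' g'. True}"
  have "?M = (\<lambda>(f, g). F f g) ` UNIV" by auto
  then have "finite ?M" "?M \<noteq> {}" by simp_all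
  then have "Max ?M \<in> ?M" by (rule Max_in)
  then obtain f g where fg: "F f g = Max ?M" by auto
  have le_Max: "F h h \<le> Max ?M" for h
    using \<open>finite ?M\<close> by (intro Max_ge) auto
  have "F f f = Max ?M \<or> F g g = Max ?M"
    using mean[of f g] le_Max[of f] le_Max[of g] fg by argo
  then show ?thesis by blast
qed

theorem mainTheorem1:
  fixes P :: "'X::finite \<Rightarrow> 'A::finite \<Rightarrow> 'A \<Rightarrow> real"
    and PX :: "'X \<Rightarrow> real"
    and Q :: "'X \<Rightarrow> 'A \<Rightarrow> real"
  assumes P_nonneg: "\<And>x a b. P x a b \<ge> 0"
    and P_sum: "(\<Sum>x\<in>UNIV. \<Sum>a\<in>UNIV. \<Sum>b\<in>UNIV. P x a b) = 1"
    and PX_marg: "\<And>x. PX x = (\<Sum>a\<in>UNIV. \<Sum>b\<in>UNIV. P x a b)"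
    and PX_uniform: "\<And>x. PX x = 1 / real (card (UNIV :: 'X set))"
    and Q_nonneg: "\<And>x a. Q x a \<ge> 0"
    and Q_sum: "\<And>x. (\<Sum>a\<in>UNIV. Q x a) = 1"
    and P_prod: "\<And>x a b. P x a b = PX x * Q x a * Q x b"
  shows "\<exists>f :: 'A \<Rightarrow> 'X. W P f f = Max {W P f' g' | f' g'. True}"
proof (rule Max_attained_on_diagonal)
  have PX_nonneg: "PX x \<ge> 0" for x
    using PX_marg P_nonneg by (simp add: sum_nonneg)
  show "W P f g \<le> (W P f f + W P g g) / 2" for f g :: "'A \<Rightarrow> 'X"
    by (rule W_product_le_symmetric_mean[where PX = PX and Q = Q, OF P_prod PX_nonneg])
qed

end
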